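(* Let $a,b,d\in\mathbb C$ with $a\notin\mathbb Z$ and $d\notin\{0,-1,-2,\dots\}$. Then, as an identity of formal power series in $x,y$, $$\mathrm H_3(a,b;d;x,y)=F(a,b;d;x)\,{}_0F_1(1-a;-y)+\sum_{k=1}^\infty\sum_{l=1}^k\frac{(-1)^{k+l}(k-1)!}{(l-1)!\,l!\,(k-l)!}\,\frac{(b)_k}{(1-a)_l(d)_k}\,x^ky^l\,F(a+k,b+k;d+k;x)\,{}_0F_1(1-a+l;-y).$$
   Context: Pochhammer symbol: $(\lambda)_k=\Gamma(\lambda+k)/\Gamma(\lambda)$ for every integer $k$ (possibly negative) whenever defined; $(\lambda)_0=1$. $F(a,b;c;x)=\sum_{k\ge0}\frac{(a)_k(b)_k}{(c)_k k!}x^k$, ${}_0F_1(c;x)=\sum_{k\ge0}\frac{x^k}{(c)_k k!}$. Confluent Horn function $\mathrm H_3(a,b;d;x,y)=\sum_{p,q\ge0}\frac{(a)_{p-q}(b)_p}{(d)_p\,p!\,q!}x^py^q$. All functions are regarded as formal power series in $x,y$; the infinite double sum converges in the formal (degree) topology. *)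

theory Defs
  imports Complex_Main "HOL-Library.Nonpos_Ints" "HOL-Computational_Algebra.Formal_Power_Series"
begin

(* Pochhammer symbol with integer index: (lam)_k = Gamma(lam+k)/Gamma(lam).
   For k >= 0 this is the rising factorial; for k < 0 it equals
   1 / ((lam+k)(lam+k+1)...(lam-1)). *)
definition pochZ :: "complex \<Rightarrow> int \<Rightarrow> complex" where
  "pochZ lam k = (if 0 \<le> k then pochhammer lam (nat k)
                  else 1 / pochhammer (lam + of_int k) (nat (- k)))"

(* Bivariate formal power series in x,y over C are represented as
   complex fps fps: outer variable x, inner variable y.
   The coefficient of x^m y^n of S is  (S $ m) $ n. *)
type_synonym bfps = "complex fps fps"

definition bX :: bfps where "bX = fps_X"
definition bY :: bfps where "bY = fps_const fps_X"
definition bconst :: "complex \<Rightarrow> bfps" where "bconst c = fps_const (fps_const c)"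

definition in_x :: "complex fps \<Rightarrow> bfps" where "in_x f = Abs_fps (\<lambda>m. fps_const (fps_nth f m))"
definition in_y :: "complex fps \<Rightarrow> bfps" where "in_y g = fps_const g"

definition hyp2F1 :: "complex \<Rightarrow> complex \<Rightarrow> complex \<Rightarrow> complex fps" where
  "hyp2F1 a b c = Abs_fps (\<lambda>k. pochhammer a k * pochhammer b k / (pochhammer c k * fact k))"

definition hyp0F1 :: "complex \<Rightarrow> complex fps" where
  "hyp0F1 c = Abs_fps (\<lambda>k. 1 / (pochhammer c k * fact k))"

definition horn_H3 :: "complex \<Rightarrow> complex \<Rightarrow> complex \<Rightarrow> bfps" where
  "horn_H3 a b d = Abs_fps (\<lambda>p. Abs_fps (\<lambda>q.
      pochZ a (int p - int q) * pochhammer b p / (pochhammer d p * fact p * fact q)))"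

end

theory Submission
  imports Defs
begin

text \<open>
  Compare the coefficients of x^m y^n after dividing by those of F(a,b;d;x) 0F1(1-a;-y).
  On the left this leaves (a-n)_m / (a)_m, since (a)_(m-n) (a-n)_n = (a-n)_m. On the right
  the shifted hypergeometric factors telescope, and the sum over l in the k-th term collapses
  by Vandermonde's identity, sum_l C(k-1,l-1) C(n,l) = C(n+k-1,k), to (-1)^k C(m,k) (n)_k / (a)_k.
  The identity is then the Chu-Vandermonde formula (a-n)_m / (a)_m = F(-m,n;a;1).
  The k-th term is divisible by x^k, so the series converges formally.
\<close>

unbundle fps_syntax

lemma sum_binomial_pred_mult_binomial:
  assumes "1 \<le> k"
  shows "(\<Sum>l\<in>{1..k}. (k - 1 choose (l - 1)) * (n choose l)) = n + k - 1 choose k"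
proof -
  have "n + k - 1 choose k = (\<Sum>i\<le>k. (k - 1 choose i) * (n choose (k - i)))"
    using vandermonde[of "k - 1" n k] assms by (simp add: add.commute)
  also have "\<dots> = (\<Sum>l\<le>k. (k - 1 choose (k - l)) * (n choose l))"
    by (rule sum.reindex_bij_witness[where i="\<lambda>l. k - l" and j="\<lambda>i. k - i"]) auto
  also have "\<dots> = (\<Sum>l\<in>{1..k}. (k - 1 choose (k - l)) * (n choose l))"
    using assms by (simp add: atMost_atLeast0 sum.atLeast_Suc_atMost)
  also have "\<dots> = (\<Sum>l\<in>{1..k}. (k - 1 choose (l - 1)) * (n choose l))"
  proof (intro sum.cong refl)
    fix l assume "l \<in> {1..k}"
    then have "l - 1 \<le> k - 1" and "k - 1 - (l - 1) = k - l" by auto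
    then show "(k - 1 choose (k - l)) * (n choose l) = (k - 1 choose (l - 1)) * (n choose l)"
      using binomial_symmetric[of "l - 1" "k - 1"] by simp
  qed
  finally show ?thesis ..
qed

lemma pochhammer_of_nat_div_fact:
  "pochhammer (of_nat n) k / fact k = (of_nat (n + k - 1 choose k) :: 'a::field_char_0)"
proof (cases n)
  case 0
  then show ?thesis by (cases k) (simp_all add: pochhammer_0_left)
next
  case (Suc n')
  have "(of_nat (n + k - 1 choose k) :: 'a) = of_nat (n + k - 1) gchoose k"
    by (rule binomial_gbinomial)
  also have "\<dots> = pochhammer (of_nat (n + k - 1) - of_nat k + 1) k / fact k"
    by (rule gbinomial_pochhammer')
  also have "of_nat (n + k - 1) - of_nat k + 1 = (of_nat n :: 'a)"
    using Suc by (simp add: of_nat_diff)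
  finally show ?thesis ..
qed

lemma pochhammer_minus_of_nat:
  "pochhammer (- of_nat m) k = ((-1) ^ k * of_nat (m choose k) * fact k :: 'a::field_char_0)"
  using gbinomial_pochhammer[of "of_nat m :: 'a" k] by (simp add: binomial_gbinomial)

lemma pochhammer_diff_div_pochhammer:
  fixes a :: "'a::field_char_0"
  assumes "pochhammer a m \<noteq> 0"
  shows "pochhammer (a - of_nat n) m / pochhammer a m =
    (\<Sum>k\<le>m. (-1) ^ k * of_nat (m choose k) * pochhammer (of_nat n) k / pochhammer a k)"
proof -
  have "\<forall>i\<in>{0..<m}. a \<noteq> - of_nat i"
    using assms by (auto simp: pochhammer_eq_0_iff)
  from Vandermonde_pochhammer[OF this, of "of_nat n"] show ?thesis
    by (simp add: atMost_atLeast0 pochhammer_minus_of_nat mult_ac)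
qed

lemma pochhammer_nonzero_if_not_Ints:
  "(z :: 'a::field_char_0) \<notin> \<int> \<Longrightarrow> pochhammer z k \<noteq> 0"
  by (auto simp: pochhammer_eq_0_iff)

lemma pochZ_diff_mult_pochhammer:
  assumes "a \<notin> \<int>"
  shows "pochZ a (int m - int n) * pochhammer (a - of_nat n) n = pochhammer (a - of_nat n) m"
proof (cases "n \<le> m")
  case True
  then have "pochZ a (int m - int n) = pochhammer a (m - n)"
    by (simp add: pochZ_def nat_diff_distrib)
  then show ?thesis
    using pochhammer_product'[of "a - of_nat n" n "m - n"] True by (simp add: mult.commute)
next
  case False
  define j where "j = n - m"
  have n: "n = m + j" using False by (simp add: j_def)
  have "a - of_nat j \<notin> \<int>"
    using assms by simp
  then have nz: "pochhammer (a - of_nat j) j \<noteq> 0"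
    by (rule pochhammer_nonzero_if_not_Ints)
  have "nat (int n - int m) = j" and "a + of_int (int m - int n) = a - of_nat j"
    using False by (simp_all add: j_def of_nat_diff)
  then have "pochZ a (int m - int n) = 1 / pochhammer (a - of_nat j) j"
    using False by (simp add: pochZ_def)
  moreover have "pochhammer (a - of_nat n) n = pochhammer (a - of_nat n) m * pochhammer (a - of_nat j) j"
    unfolding n pochhammer_product' by (simp add: algebra_simps)
  ultimately show ?thesis using nz by simp
qed

lemma hyp2F1_shift_nth:
  assumes "k \<le> m" and "pochhammer a k \<noteq> 0"
  shows "pochhammer b k / pochhammer d k * hyp2F1 (a + of_nat k) (b + of_nat k) (d + of_nat k) $ (m - k)
    = hyp2F1 a b d $ m * (fact m / fact (m - k)) / pochhammer a k"
proof -
  have split: "pochhammer z m = pochhammer z k * pochhammer (z + of_nat k) (m - k)" for z :: complex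
    using pochhammer_product'[of z k "m - k"] assms(1) by simp
  show ?thesis
    using assms(2) by (simp add: hyp2F1_def split field_simps)
qed

lemma hyp0F1_shift_nth:
  assumes "l \<le> n"
  shows "hyp0F1 (c + of_nat l) $ (n - l) / pochhammer c l = hyp0F1 c $ n * (fact n / fact (n - l))"
proof -
  have "pochhammer c n = pochhammer c l * pochhammer (c + of_nat l) (n - l)"
    using pochhammer_product'[of c l "n - l"] assms by simp
  then show ?thesis
    by (simp add: hyp0F1_def field_simps)
qed

lemma fps_compose_uminus_X_nth: "((f :: 'a::comm_ring_1 fps) oo - fps_X) $ n = (-1) ^ n * f $ n"
  by (simp add: fps_compose_uminus')

lemma horn_H3_nth:
  assumes "a \<notin> \<int>"
  shows "horn_H3 a b d $ m $ n = hyp2F1 a b d $ m * (hyp0F1 (1 - a) oo - fps_X) $ n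
    * (pochhammer (a - of_nat n) m / pochhammer a m)"
proof -
  have "1 - a \<notin> \<int>" and "a - of_nat n \<notin> \<int>"
    using assms by simp_all
  then have nz: "pochhammer a m \<noteq> 0" "pochhammer (1 - a) n \<noteq> 0" "pochhammer (a - of_nat n) n \<noteq> 0"
    using assms by (simp_all add: pochhammer_nonzero_if_not_Ints)
  have "pochhammer (1 - a) n = (-1) ^ n * pochhammer (a - of_nat n) n"
    using pochhammer_minus[of "a - 1" n] by (simp add: algebra_simps)
  then have G: "(hyp0F1 (1 - a) oo - fps_X) $ n = 1 / (pochhammer (a - of_nat n) n * fact n)"
    by (simp add: fps_compose_uminus_X_nth hyp0F1_def)
  have Z: "pochZ a (int m - int n) = pochhammer (a - of_nat n) m / pochhammer (a - of_nat n) n"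
    using pochZ_diff_mult_pochhammer[OF assms, of m n] nz(3) by (simp add: field_simps)
  show ?thesis
    using nz by (simp add: horn_H3_def hyp2F1_def G Z field_simps)
qed

lemma bivariate_monomial_nth:
  "(bconst c * bX ^ k * bY ^ l * in_x F * in_y G) $ m $ n =
     (if k \<le> m \<and> l \<le> n then c * F $ (m - k) * G $ (n - l) else 0)"
proof -
  define g where "g = fps_const c * fps_X ^ l * G"
  have "bconst c * bX ^ k * bY ^ l * in_x F * in_y G = fps_X ^ k * (fps_const g * in_x F)"
    unfolding bconst_def bX_def bY_def in_y_def g_def
    by (simp add: fps_const_power[symmetric] fps_const_mult[symmetric] del: fps_const_power fps_const_mult)
  moreover have "g $ n = (if l \<le> n then c * G $ (n - l) else 0)"
    using fps_X_power_mult_nth[of l G n] by (simp add: g_def mult.assoc)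
  ultimately show ?thesis
    by (simp only: fps_X_power_mult_nth) (simp add: in_x_def)
qed

lemma in_x_mult_in_y_nth: "(in_x F * in_y G) $ m $ n = F $ m * G $ n"
  by (simp add: in_x_def in_y_def)

definition H3_coeff :: "complex \<Rightarrow> complex \<Rightarrow> complex \<Rightarrow> nat \<Rightarrow> nat \<Rightarrow> complex" where
  "H3_coeff a b d k l = (-1) ^ (k + l) * fact (k - 1) / (fact (l - 1) * fact l * fact (k - l))
     * pochhammer b k / (pochhammer (1 - a) l * pochhammer d k)"

lemma H3_coeff_mult_nth:
  assumes "a \<notin> \<int>" and "1 \<le> l" and "l \<le> k"
  shows "(if k \<le> m \<and> l \<le> n then H3_coeff a b d k l
        * hyp2F1 (a + of_nat k) (b + of_nat k) (d + of_nat k) $ (m - k)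
        * (hyp0F1 (1 - a + of_nat l) oo - fps_X) $ (n - l) else 0)
    = hyp2F1 a b d $ m * (hyp0F1 (1 - a) oo - fps_X) $ n
      * ((-1) ^ k * of_nat (m choose k) * fact k / pochhammer a k
         * of_nat ((k - 1 choose (l - 1)) * (n choose l)))"
proof (cases "k \<le> m \<and> l \<le> n")
  case True
  then have "k \<le> m" and "l \<le> n" by simp_all
  have "pochhammer a k \<noteq> 0"
    using assms(1) by (rule pochhammer_nonzero_if_not_Ints)
  from hyp2F1_shift_nth[OF \<open>k \<le> m\<close> this]
  have F: "pochhammer b k / pochhammer d k * hyp2F1 (a + of_nat k) (b + of_nat k) (d + of_nat k) $ (m - k)
      = hyp2F1 a b d $ m * (of_nat (m choose k) * fact k) / pochhammer a k"
    using binomial_fact[OF \<open>k \<le> m\<close>, where 'a=complex] by simp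
  have G: "(hyp0F1 (1 - a + of_nat l) oo - fps_X) $ (n - l) / pochhammer (1 - a) l
      = (-1) ^ (n - l) * hyp0F1 (1 - a) $ n * (of_nat (n choose l) * fact l)"
    unfolding fps_compose_uminus_X_nth times_divide_eq_right[symmetric] hyp0F1_shift_nth[OF \<open>l \<le> n\<close>]
    using binomial_fact[OF \<open>l \<le> n\<close>, where 'a=complex] by simp
  have C: "fact (k - 1) / (fact (l - 1) * fact (k - l)) = (of_nat (k - 1 choose (l - 1)) :: complex)"
    using binomial_fact[of "l - 1" "k - 1", where 'a=complex] assms(2,3) by simp
  have S: "(-1 :: complex) ^ (k + l) * (-1) ^ (n - l) = (-1) ^ k * (-1) ^ n"
    using \<open>l \<le> n\<close> by (simp flip: power_add)
  have "H3_coeff a b d k l * hyp2F1 (a + of_nat k) (b + of_nat k) (d + of_nat k) $ (m - k)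
        * (hyp0F1 (1 - a + of_nat l) oo - fps_X) $ (n - l)
      = (-1) ^ (k + l) * (fact (k - 1) / (fact (l - 1) * fact (k - l))) / fact l
        * (pochhammer b k / pochhammer d k * hyp2F1 (a + of_nat k) (b + of_nat k) (d + of_nat k) $ (m - k))
        * ((hyp0F1 (1 - a + of_nat l) oo - fps_X) $ (n - l) / pochhammer (1 - a) l)"
    by (simp add: H3_coeff_def mult_ac)
  also have "\<dots> = hyp2F1 a b d $ m * (hyp0F1 (1 - a) oo - fps_X) $ n
      * ((-1) ^ k * of_nat (m choose k) * fact k / pochhammer a k
         * of_nat ((k - 1 choose (l - 1)) * (n choose l)))"
    unfolding F G C by (simp add: fps_compose_uminus_X_nth S[symmetric] field_simps)
  finally show ?thesis
    using True by simp
qed (auto simp: binomial_eq_0)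

definition H3_expansion_term :: "complex \<Rightarrow> complex \<Rightarrow> complex \<Rightarrow> nat \<Rightarrow> bfps" where
  "H3_expansion_term a b d k = (\<Sum>l\<in>{1..k}. bconst (H3_coeff a b d k l) * bX ^ k * bY ^ l
     * in_x (hyp2F1 (a + of_nat k) (b + of_nat k) (d + of_nat k))
     * in_y (hyp0F1 (1 - a + of_nat l) oo - fps_X))"

lemma H3_expansion_term_nth:
  assumes "a \<notin> \<int>" and "1 \<le> k"
  shows "H3_expansion_term a b d k $ m $ n = hyp2F1 a b d $ m * (hyp0F1 (1 - a) oo - fps_X) $ n
    * ((-1) ^ k * of_nat (m choose k) * pochhammer (of_nat n) k / pochhammer a k)"
proof -
  have "H3_expansion_term a b d k $ m $ n =
      (\<Sum>l\<in>{1..k}. hyp2F1 a b d $ m * (hyp0F1 (1 - a) oo - fps_X) $ n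
      * ((-1) ^ k * of_nat (m choose k) * fact k / pochhammer a k
         * of_nat ((k - 1 choose (l - 1)) * (n choose l))))"
    unfolding H3_expansion_term_def fps_sum_nth bivariate_monomial_nth
    using assms(1) by (intro sum.cong refl) (simp add: H3_coeff_mult_nth)
  also have "\<dots> = hyp2F1 a b d $ m * (hyp0F1 (1 - a) oo - fps_X) $ n
      * ((-1) ^ k * of_nat (m choose k) * fact k / pochhammer a k
         * of_nat (\<Sum>l\<in>{1..k}. (k - 1 choose (l - 1)) * (n choose l)))"
    by (simp add: sum_distrib_left)
  moreover have "of_nat (\<Sum>l\<in>{1..k}. (k - 1 choose (l - 1)) * (n choose l)) =
      pochhammer (of_nat n) k / (fact k :: complex)"
    unfolding sum_binomial_pred_mult_binomial[OF assms(2)] by (rule pochhammer_of_nat_div_fact[symmetric])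
  ultimately show ?thesis
    by simp
qed

lemma sums_fps_if_nth_vanishes_below:
  fixes f :: "nat \<Rightarrow> 'a::comm_ring_1 fps"
  assumes "\<And>k m. m < k \<Longrightarrow> f k $ m = 0"
  shows "f sums Abs_fps (\<lambda>m. \<Sum>k\<le>m. f k $ m)"
  unfolding sums_def
proof (rule tendsto_fpsI)
  fix m
  show "\<forall>\<^sub>F N in sequentially. (\<Sum>k<N. f k) $ m = Abs_fps (\<lambda>m. \<Sum>k\<le>m. f k $ m) $ m"
  proof (rule eventually_sequentiallyI)
    fix N assume "Suc m \<le> N"
    then show "(\<Sum>k<N. f k) $ m = Abs_fps (\<lambda>m. \<Sum>k\<le>m. f k $ m) $ m"
      unfolding fps_sum_nth fps_nth_Abs_fps
      by (intro sum.mono_neutral_right) (auto simp: assms)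
  qed
qed

theorem mainTheorem6:
  fixes a b d :: complex
  assumes "a \<notin> \<int>" and "d \<notin> \<int>\<^sub>\<le>\<^sub>0"
  defines "T \<equiv> (\<lambda>k::nat. \<Sum>l\<in>{1..k}.
     bconst ((-1) ^ (k + l) * fact (k - 1) / (fact (l - 1) * fact l * fact (k - l))
             * pochhammer b k / (pochhammer (1 - a) l * pochhammer d k))
     * bX ^ k * bY ^ l
     * in_x (hyp2F1 (a + of_nat k) (b + of_nat k) (d + of_nat k))
     * in_y (hyp0F1 (1 - a + of_nat l) oo (- fps_X)))"
  shows "summable T \<and>
    horn_H3 a b d = in_x (hyp2F1 a b d) * in_y (hyp0F1 (1 - a) oo (- fps_X)) + (\<Sum>k. T k)"
proof -
  define F where "F = hyp2F1 a b d"
  define G where "G = hyp0F1 (1 - a) oo - fps_X"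
  define r where "r m n k = (-1) ^ k * of_nat (m choose k) * pochhammer (of_nat n) k / pochhammer a k"
    for m n k
  have T: "T = H3_expansion_term a b d"
    by (simp add: T_def H3_expansion_term_def H3_coeff_def fun_eq_iff)
  have T_nth: "T k $ m $ n = (if k = 0 then 0 else F $ m * G $ n * r m n k)" for k m n
    using H3_expansion_term_nth[OF assms(1)] by (simp add: T F_def G_def r_def H3_expansion_term_def)
  have "T k $ m = 0" if "m < k" for k m
    using that by (simp add: fps_eq_iff T_nth r_def)
  then have sums: "T sums Abs_fps (\<lambda>m. \<Sum>k\<le>m. T k $ m)"
    by (rule sums_fps_if_nth_vanishes_below)
  have "horn_H3 a b d $ m $ n = (in_x F * in_y G + Abs_fps (\<lambda>m. \<Sum>k\<le>m. T k $ m)) $ m $ n" for m n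
  proof -
    have "horn_H3 a b d $ m $ n = F $ m * G $ n * (\<Sum>k\<le>m. r m n k)"
      using horn_H3_nth[OF assms(1)]
        pochhammer_diff_div_pochhammer[OF pochhammer_nonzero_if_not_Ints[OF assms(1)]]
      by (simp add: F_def G_def r_def)
    also have "\<dots> = F $ m * G $ n + (\<Sum>k\<le>m. T k $ m $ n)"
      by (simp add: T_nth sum.atMost_shift distrib_left sum_distrib_left r_def)
    finally show ?thesis
      by (simp add: in_x_mult_in_y_nth fps_sum_nth)
  qed
  then show ?thesis
    using sums by (auto simp: sums_iff fps_eq_iff F_def G_def)
qed

end
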